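(* Let $p, q$ be distinct primes and $n = pq$. Then the zero-divisor graph $\Gamma(\mathbb{Z}_n)$ is a very cost effective graph.
   Context: $\mathbb{Z}_n$ is the ring of residue classes modulo $n$. The zero-divisor graph $\Gamma(\mathbb{Z}_n)$ has as vertices the nonzero zero-divisors of $\mathbb{Z}_n$, two distinct vertices being adjacent iff their product is $0$. For a graph $G=(V,E)$ and $S\subseteq V$, a vertex $v\in S$ is very cost effective if $|N(v)\cap S| < |N(v)\cap (V\setminus S)|$, where $N(v)$ is the open neighborhood of $v$; $S$ is very cost effective if every vertex of $S$ is. A bipartition $\{S, V\setminus S\}$ is very cost effective if both parts are very cost effective sets, and $G$ is very cost effective if it has a very cost effective bipartition. *)

theory Defs
  imports "HOL-Computational_Algebra.Primes"
begin

text \<open>A simple graph is given by a finite vertex set V and a symmetric irreflexive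
adjacency relation E. Open neighbourhood of v: vertices of V adjacent to v.\<close>

definition nbhd :: "'a set \<Rightarrow> ('a \<Rightarrow> 'a \<Rightarrow> bool) \<Rightarrow> 'a \<Rightarrow> 'a set" where
  "nbhd V E v = {u \<in> V. E v u}"

definition very_cost_effective_vertex ::
    "'a set \<Rightarrow> ('a \<Rightarrow> 'a \<Rightarrow> bool) \<Rightarrow> 'a set \<Rightarrow> 'a \<Rightarrow> bool" where
  "very_cost_effective_vertex V E S v \<longleftrightarrow>
     card (nbhd V E v \<inter> S) < card (nbhd V E v \<inter> (V - S))"

definition very_cost_effective_set ::
    "'a set \<Rightarrow> ('a \<Rightarrow> 'a \<Rightarrow> bool) \<Rightarrow> 'a set \<Rightarrow> bool" where
  "very_cost_effective_set V E S \<longleftrightarrow> S \<subseteq> V \<and> (\<forall>v\<in>S. very_cost_effective_vertex V E S v)"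

definition very_cost_effective_graph :: "'a set \<Rightarrow> ('a \<Rightarrow> 'a \<Rightarrow> bool) \<Rightarrow> bool" where
  "very_cost_effective_graph V E \<longleftrightarrow>
     (\<exists>S \<subseteq> V. S \<noteq> {} \<and> V - S \<noteq> {} \<and> very_cost_effective_set V E S \<and> very_cost_effective_set V E (V - S))"

text \<open>Zero-divisor graph of Z_n, residues represented by 0..n-1.
Vertices: nonzero zero-divisors; adjacency: distinct with product 0 mod n.\<close>
definition zd_vertices :: "nat \<Rightarrow> nat set" where
  "zd_vertices n = {x \<in> {1..<n}. \<exists>y \<in> {1..<n}. (x * y) mod n = 0}"

definition zd_adj :: "nat \<Rightarrow> nat \<Rightarrow> nat \<Rightarrow> bool" where
  "zd_adj n x y \<longleftrightarrow> x \<noteq> y \<and> (x * y) mod n = 0"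

end

theory Submission
  imports Defs
begin

text \<open>For distinct primes \<open>p, q\<close> the graph \<open>\<Gamma>(\<int>\<^sub>p\<^sub>q)\<close> is bipartite: every vertex is a
  multiple of exactly one of \<open>p\<close> and \<open>q\<close>, and two vertices are adjacent iff one is a multiple
  of \<open>p\<close> and the other of \<open>q\<close>. Splitting the vertices along this bipartition, each vertex
  has no neighbour in its own part and at least one (namely \<open>q\<close>, resp. \<open>p\<close>) in the other.\<close>

lemma very_cost_effective_set_if_independent:
  assumes "finite V" "S \<subseteq> V"
    and "\<And>u v. u \<in> S \<Longrightarrow> v \<in> S \<Longrightarrow> \<not> E u v"
    and "\<And>v. v \<in> S \<Longrightarrow> \<exists>u \<in> V - S. E v u"
  shows "very_cost_effective_set V E S"
  unfolding very_cost_effective_set_def very_cost_effective_vertex_def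
proof (intro conjI ballI)
  fix v assume "v \<in> S"
  have "nbhd V E v \<inter> S = {}"
    using assms(3) \<open>v \<in> S\<close> unfolding nbhd_def by blast
  moreover have "nbhd V E v \<inter> (V - S) \<noteq> {}"
    using assms(4) \<open>v \<in> S\<close> unfolding nbhd_def by blast
  moreover have "finite (nbhd V E v \<inter> (V - S))"
    using assms(1) unfolding nbhd_def by simp
  ultimately show "card (nbhd V E v \<inter> S) < card (nbhd V E v \<inter> (V - S))"
    by (simp add: card_gt_0_iff)
qed (use assms(2) in simp)

lemma very_cost_effective_graph_if_bipartite:
  assumes "finite V" "S \<subseteq> V" "S \<noteq> {}" "V - S \<noteq> {}"
    and "\<And>u v. u \<in> S \<Longrightarrow> v \<in> S \<Longrightarrow> \<not> E u v"
    and "\<And>u v. u \<in> V - S \<Longrightarrow> v \<in> V - S \<Longrightarrow> \<not> E u v"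
    and "\<And>v. v \<in> V \<Longrightarrow> \<exists>u \<in> V. E v u"
  shows "very_cost_effective_graph V E"
proof -
  have cross: "\<exists>u \<in> V - T. E v u"
    if "v \<in> T" "T \<subseteq> V" and independent: "\<And>u w. u \<in> T \<Longrightarrow> w \<in> T \<Longrightarrow> \<not> E u w"
    for T v
  proof -
    obtain u where "u \<in> V" "E v u"
      using assms(7) \<open>v \<in> T\<close> \<open>T \<subseteq> V\<close> by blast
    with \<open>v \<in> T\<close> independent show ?thesis
      by blast
  qed
  have "very_cost_effective_set V E S"
    using assms(1,2,5) cross[OF _ assms(2,5)] by (rule very_cost_effective_set_if_independent)
  moreover have "very_cost_effective_set V E (V - S)"
    using assms(1) _ assms(6) cross[OF _ _ assms(6)] by (rule very_cost_effective_set_if_independent) blast+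
  ultimately show ?thesis
    unfolding very_cost_effective_graph_def using assms(2-4) by blast
qed

lemma not_dvd_both_if_less_mult:
  fixes a b x :: nat
  assumes "coprime a b" "0 < x" "x < a * b"
  shows "\<not> (a dvd x \<and> b dvd x)"
proof
  assume "a dvd x \<and> b dvd x"
  then have "a * b dvd x"
    using \<open>coprime a b\<close> by (blast intro: divides_mult)
  then have "a * b \<le> x"
    using \<open>0 < x\<close> by (rule dvd_imp_le)
  with \<open>x < a * b\<close> show False
    by simp
qed

context
  fixes p q :: nat
  assumes p: "prime p" and q: "prime q" and "p \<noteq> q"
begin

private lemma coprime_p_q: "coprime p q"
  using p q \<open>p \<noteq> q\<close> by (simp add: primes_coprime)

private lemma one_less_p_q: "1 < p" "1 < q"
  using p q prime_gt_1_nat by blast+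

private lemma dvd_p_q_mult_iff: "p * q dvd x * y \<longleftrightarrow> (p dvd x \<or> p dvd y) \<and> (q dvd x \<or> q dvd y)"
proof
  assume "p * q dvd x * y"
  then have "p dvd x * y" "q dvd x * y"
    by (auto intro: dvd_mult_left dvd_mult_right)
  then show "(p dvd x \<or> p dvd y) \<and> (q dvd x \<or> q dvd y)"
    using p q by (simp add: prime_dvd_mult_iff)
qed (use coprime_p_q in \<open>auto simp: divides_mult\<close>)

lemma mem_zd_vertices_prime_mult_iff:
  "x \<in> zd_vertices (p * q) \<longleftrightarrow> 0 < x \<and> x < p * q \<and> (p dvd x \<or> q dvd x)"
proof
  assume "x \<in> zd_vertices (p * q)"
  then obtain y where x: "0 < x" "x < p * q" and y: "0 < y" "y < p * q"
    and "p * q dvd x * y"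
    unfolding zd_vertices_def by (auto simp: mod_eq_0_iff_dvd Suc_le_eq)
  moreover have "\<not> (p dvd y \<and> q dvd y)"
    using not_dvd_both_if_less_mult[OF coprime_p_q y] .
  ultimately show "0 < x \<and> x < p * q \<and> (p dvd x \<or> q dvd x)"
    by (auto simp: dvd_p_q_mult_iff)
next
  assume x: "0 < x \<and> x < p * q \<and> (p dvd x \<or> q dvd x)"
  have "p \<in> {1..<p * q}" "q \<in> {1..<p * q}"
    using one_less_p_q by simp_all
  from x consider "p dvd x" | "q dvd x"
    by blast
  then obtain y where "y \<in> {1..<p * q}" "p * q dvd x * y"
  proof cases
    case 1
    \<comment> \<open>a multiple of \<open>p\<close> is annihilated by \<open>q\<close>, and vice versa\<close>
    with \<open>q \<in> {1..<p * q}\<close> show ?thesis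
      by (intro that[of q]) (simp_all add: dvd_p_q_mult_iff)
  next
    case 2
    with \<open>p \<in> {1..<p * q}\<close> show ?thesis
      by (intro that[of p]) (simp_all add: dvd_p_q_mult_iff)
  qed
  moreover have "x \<in> {1..<p * q}"
    using x by simp
  ultimately show "x \<in> zd_vertices (p * q)"
    unfolding zd_vertices_def mod_eq_0_iff_dvd by blast
qed

theorem zero_divisor_graph_very_cost_effective:
  "very_cost_effective_graph (zd_vertices (p * q)) (zd_adj (p * q))"
proof (rule very_cost_effective_graph_if_bipartite)
  let ?V = "zd_vertices (p * q)"
  let ?S = "{x \<in> ?V. p dvd x}"
  have one_of: "p dvd x \<or> q dvd x" if "x \<in> ?V" for x
    using that by (simp add: mem_zd_vertices_prime_mult_iff)
  have not_both: "\<not> (p dvd x \<and> q dvd x)" if "x \<in> ?V" for x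
    using that not_dvd_both_if_less_mult[OF coprime_p_q]
    by (simp add: mem_zd_vertices_prime_mult_iff)
  have adj: "zd_adj (p * q) x y \<longleftrightarrow> x \<noteq> y \<and> (p dvd x \<or> p dvd y) \<and> (q dvd x \<or> q dvd y)" for x y
    unfolding zd_adj_def mod_eq_0_iff_dvd dvd_p_q_mult_iff ..
  have "p \<in> ?V" "q \<in> ?V"
    using one_less_p_q by (simp_all add: mem_zd_vertices_prime_mult_iff)
  then show "?S \<noteq> {}" "?V - ?S \<noteq> {}"
    using not_both[of q] by auto
  show "finite ?V"
    by (rule finite_subset[of _ "{1..<p * q}"]) (auto simp: zd_vertices_def)
  show "?S \<subseteq> ?V"
    by blast
  show "\<not> zd_adj (p * q) u v" if "u \<in> ?S" "v \<in> ?S" for u v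
    using that not_both[of u] not_both[of v] by (auto simp: adj)
  show "\<not> zd_adj (p * q) u v" if "u \<in> ?V - ?S" "v \<in> ?V - ?S" for u v
    using that by (auto simp: adj)
  show "\<exists>u \<in> ?V. zd_adj (p * q) v u" if "v \<in> ?V" for v
  proof (cases "p dvd v")
    case True
    with not_both[OF that] have "zd_adj (p * q) v q"
      by (auto simp: adj)
    with \<open>q \<in> ?V\<close> show ?thesis by blast
  next
    case False
    with one_of[OF that] have "zd_adj (p * q) v p"
      by (auto simp: adj)
    with \<open>p \<in> ?V\<close> show ?thesis by blast
  qed
qed

end

theorem mainTheorem2:
  fixes p q :: nat
  assumes "prime p" and "prime q" and "p \<noteq> q"
  shows "very_cost_effective_graph (zd_vertices (p * q)) (zd_adj (p * q))"
  using zero_divisor_graph_very_cost_effective[OF assms] .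

end
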